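(* Let $1<w\le 2$, $h>1$, $k\ge 2$, and let $\frac12\le y_1<\dots<y_n\le h-\frac12$ be uniformly spaced with $y_{i+1}-y_i=\frac1k$ for all $i$. Let $(\mathbf x,\prec)$ be a $\frac1k$-reasonable layout of this instance, and let $W=[a,b]\subseteq[\frac12,h-\frac12]$ and $W'=[a-\frac1k,b+\frac1k]$. Then the number of bad squares $s_i$ with $y_i\in W$ is at most three times the number of standard bad squares $s_i$ with $y_i\in W'$.
   Context: The instance is the strip $T=[0,w]\times[0,h]$ with the given $y_i$. A layout is a pair $(\mathbf x,\prec)$ where $\mathbf x=(x_1,\dots,x_n)$ with $x_i\in[\frac12,w-\frac12]$, and $\prec$ is a total order on the squares $s_1,\dots,s_n$, where $s_i$ is the closed axis-parallel unit square with centre $(x_i,y_i)$. If $s_i\prec s_j$ we say $s_j$ is in front of $s_i$ and $s_i$ is behind $s_j$. A point $p$ on the boundary of $s_i$ is visible if every square $s_j$ ($j\neq i$) containing $p$ is behind $s_i$, and covered otherwise. The visible perimeter of $s_i$ is the total length of its visible boundary points; the gap of $s_i$ is its visible perimeter minus $2$, the gap of a layout is the minimum gap of its squares, and a layout is $\varepsilon$-reasonable if its gap is larger than $\varepsilon$. A bad square is a square with at least two of its four corners covered; a standard bad square is a bad square one of whose vertical sides is entirely covered. *)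

theory Defs
  imports "HOL-Analysis.Analysis"
begin

text \<open>Squares are indexed by i < n. Square i has centre (x i, y i).
  The order is a strict linear order P on {..<n}: (i,j) \<in> P means s_i \<prec> s_j,
  i.e. s_j is in front of s_i.\<close>

definition sq :: "(nat \<Rightarrow> real) \<Rightarrow> (nat \<Rightarrow> real) \<Rightarrow> nat \<Rightarrow> (real \<times> real) set" where
  "sq x y i = {p. \<bar>fst p - x i\<bar> \<le> 1/2 \<and> \<bar>snd p - y i\<bar> \<le> 1/2}"

definition is_layout :: "real \<Rightarrow> nat \<Rightarrow> (nat \<Rightarrow> real) \<Rightarrow> (nat \<times> nat) set \<Rightarrow> bool" where
  "is_layout w n x P \<longleftrightarrow> (\<forall>i<n. 1/2 \<le> x i \<and> x i \<le> w - 1/2) \<and> strict_linear_order_on {..<n} P"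

definition covered :: "nat \<Rightarrow> (nat \<Rightarrow> real) \<Rightarrow> (nat \<Rightarrow> real) \<Rightarrow> (nat \<times> nat) set \<Rightarrow> nat \<Rightarrow> real \<times> real \<Rightarrow> bool" where
  "covered n x y P i p \<longleftrightarrow> (\<exists>j<n. j \<noteq> i \<and> p \<in> sq x y j \<and> (i, j) \<in> P)"

definition visible :: "nat \<Rightarrow> (nat \<Rightarrow> real) \<Rightarrow> (nat \<Rightarrow> real) \<Rightarrow> (nat \<times> nat) set \<Rightarrow> nat \<Rightarrow> real \<times> real \<Rightarrow> bool" where
  "visible n x y P i p \<longleftrightarrow> \<not> covered n x y P i p"

definition bottom_side :: "(nat \<Rightarrow> real) \<Rightarrow> (nat \<Rightarrow> real) \<Rightarrow> nat \<Rightarrow> real \<Rightarrow> real \<times> real" where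
  "bottom_side x y i t = (x i + t, y i - 1/2)"
definition top_side :: "(nat \<Rightarrow> real) \<Rightarrow> (nat \<Rightarrow> real) \<Rightarrow> nat \<Rightarrow> real \<Rightarrow> real \<times> real" where
  "top_side x y i t = (x i + t, y i + 1/2)"
definition left_side :: "(nat \<Rightarrow> real) \<Rightarrow> (nat \<Rightarrow> real) \<Rightarrow> nat \<Rightarrow> real \<Rightarrow> real \<times> real" where
  "left_side x y i t = (x i - 1/2, y i + t)"
definition right_side :: "(nat \<Rightarrow> real) \<Rightarrow> (nat \<Rightarrow> real) \<Rightarrow> nat \<Rightarrow> real \<Rightarrow> real \<times> real" where
  "right_side x y i t = (x i + 1/2, y i + t)"

definition side_visible_length ::
  "nat \<Rightarrow> (nat \<Rightarrow> real) \<Rightarrow> (nat \<Rightarrow> real) \<Rightarrow> (nat \<times> nat) set \<Rightarrow> nat \<Rightarrow> (real \<Rightarrow> real \<times> real) \<Rightarrow> real" where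
  "side_visible_length n x y P i c = measure lborel {t \<in> {-1/2..1/2}. visible n x y P i (c t)}"

definition visible_perimeter :: "nat \<Rightarrow> (nat \<Rightarrow> real) \<Rightarrow> (nat \<Rightarrow> real) \<Rightarrow> (nat \<times> nat) set \<Rightarrow> nat \<Rightarrow> real" where
  "visible_perimeter n x y P i =
     side_visible_length n x y P i (bottom_side x y i) + side_visible_length n x y P i (top_side x y i)
   + side_visible_length n x y P i (left_side x y i) + side_visible_length n x y P i (right_side x y i)"

definition sq_gap :: "nat \<Rightarrow> (nat \<Rightarrow> real) \<Rightarrow> (nat \<Rightarrow> real) \<Rightarrow> (nat \<times> nat) set \<Rightarrow> nat \<Rightarrow> real" where
  "sq_gap n x y P i = visible_perimeter n x y P i - 2"

text \<open>The gap of the layout is the minimum gap; it exceeds \<epsilon> iff every square's gap does.\<close>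
definition reasonable :: "real \<Rightarrow> nat \<Rightarrow> (nat \<Rightarrow> real) \<Rightarrow> (nat \<Rightarrow> real) \<Rightarrow> (nat \<times> nat) set \<Rightarrow> bool" where
  "reasonable \<epsilon> n x y P \<longleftrightarrow> (\<forall>i<n. sq_gap n x y P i > \<epsilon>)"

definition corners :: "(nat \<Rightarrow> real) \<Rightarrow> (nat \<Rightarrow> real) \<Rightarrow> nat \<Rightarrow> (real \<times> real) set" where
  "corners x y i = {(x i - 1/2, y i - 1/2), (x i + 1/2, y i - 1/2),
                    (x i - 1/2, y i + 1/2), (x i + 1/2, y i + 1/2)}"

definition bad :: "nat \<Rightarrow> (nat \<Rightarrow> real) \<Rightarrow> (nat \<Rightarrow> real) \<Rightarrow> (nat \<times> nat) set \<Rightarrow> nat \<Rightarrow> bool" where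
  "bad n x y P i \<longleftrightarrow> card {c \<in> corners x y i. covered n x y P i c} \<ge> 2"

definition standard_bad :: "nat \<Rightarrow> (nat \<Rightarrow> real) \<Rightarrow> (nat \<Rightarrow> real) \<Rightarrow> (nat \<times> nat) set \<Rightarrow> nat \<Rightarrow> bool" where
  "standard_bad n x y P i \<longleftrightarrow> bad n x y P i \<and>
     ((\<forall>t \<in> {-1/2..1/2}. covered n x y P i (left_side x y i t)) \<or>
      (\<forall>t \<in> {-1/2..1/2}. covered n x y P i (right_side x y i t)))"

end

theory Submission
  imports Defs
begin

(*
  Since w \<le> 2, all centres have x-coordinate in [1/2, 3/2], so any two squares are at
  horizontal distance at most 1; a covered corner of a square s is covered by a square in
  front of s whose centre lies at vertical distance at most 1 below or above that of s.

  If s has two squares in front of it, one weakly above and one weakly below s and at most 1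
  apart vertically, then either they lie on the same horizontal side of s and hide that whole
  vertical side (s is standard bad), or they lie on opposite sides and leave visible only
  pieces of total length at most \<bar>\<Delta>x\<bar> + \<bar>\<Delta>y\<bar> \<le> 2, contradicting reasonableness.
  Comparing a bad square s_i with its neighbours s_(i-1), s_(i+1) in the order produces such a
  configuration around s_(i-1), s_i or s_(i+1). When both corners of one horizontal side of s_i
  are covered, that side is hidden, and a neighbour in front of s_i would hide a vertical side
  up to length 1/k, leaving visible perimeter at most 2 + 1/k; so that neighbour is behind s_i.
  Thus every bad square has a standard bad neighbour at vertical distance at most 1/k.
*)

definition in_front :: "nat \<Rightarrow> (nat \<times> nat) set \<Rightarrow> nat \<Rightarrow> nat \<Rightarrow> bool" where
  "in_front n P i j \<longleftrightarrow> j < n \<and> j \<noteq> i \<and> (i, j) \<in> P"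

lemma mem_sq_iff: "(a, b) \<in> sq x y j \<longleftrightarrow> \<bar>a - x j\<bar> \<le> 1/2 \<and> \<bar>b - y j\<bar> \<le> 1/2"
  by (simp add: sq_def)

lemma coveredI:
  "in_front n P i j \<Longrightarrow> \<bar>a - x j\<bar> \<le> 1/2 \<Longrightarrow> \<bar>b - y j\<bar> \<le> 1/2 \<Longrightarrow> covered n x y P i (a, b)"
  by (auto simp: covered_def in_front_def mem_sq_iff)

lemma coveredE:
  assumes "covered n x y P i (a, b)"
  obtains j where "in_front n P i j" "\<bar>a - x j\<bar> \<le> 1/2" "\<bar>b - y j\<bar> \<le> 1/2"
  using assms by (auto simp: covered_def in_front_def mem_sq_iff)

lemma unit_intervals_cover:
  fixes c c\<^sub>1 c\<^sub>2 t :: real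
  assumes "c\<^sub>1 \<le> c" "c \<le> c\<^sub>2" "c\<^sub>2 \<le> c\<^sub>1 + 1" "\<bar>t - c\<bar> \<le> 1/2"
  shows "\<bar>t - c\<^sub>1\<bar> \<le> 1/2 \<or> \<bar>t - c\<^sub>2\<bar> \<le> 1/2"
  using assms by linarith

lemma side_visible_length_le:
  assumes "l \<le> u" and "\<And>t. \<bar>t\<bar> \<le> 1/2 \<Longrightarrow> t < l \<or> u < t \<Longrightarrow> covered n x y P i (c t)"
  shows "side_visible_length n x y P i c \<le> u - l"
proof -
  let ?A = "{t \<in> {-1/2..1/2}. visible n x y P i (c t)}"
  have "?A \<subseteq> {l..u}" using assms(2) by (force simp: visible_def)
  show ?thesis \<comment> \<open>a non-measurable set has measure 0\<close>
  proof (cases "?A \<in> sets lborel")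
    case True
    have "{l..u} \<in> fmeasurable lborel"
      by (metis cbox_interval fmeasurable_cbox)
    then have "measure lborel ?A \<le> measure lborel {l..u}"
      using \<open>?A \<subseteq> {l..u}\<close> True by (intro measure_mono_fmeasurable) auto
    then show ?thesis using assms(1) by (simp add: side_visible_length_def)
  next
    case False
    then show ?thesis using assms(1) by (simp add: side_visible_length_def measure_notin_sets)
  qed
qed

lemma side_visible_length_le_one: "side_visible_length n x y P i c \<le> 1"
  using side_visible_length_le[of "-1/2" "1/2"] by force

lemma side_visible_length_le_offset:
  assumes "\<bar>d\<bar> \<le> 1" and "\<And>t. \<bar>t\<bar> \<le> 1/2 \<Longrightarrow> \<bar>t - d\<bar> \<le> 1/2 \<Longrightarrow> covered n x y P i (c t)"
  shows "side_visible_length n x y P i c \<le> \<bar>d\<bar>"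
proof (cases "0 \<le> d")
  case True
  have "side_visible_length n x y P i c \<le> (d - 1/2) - (-1/2)"
    using True by (intro side_visible_length_le assms(2)) arith+
  with True show ?thesis by simp
next
  case False
  have "side_visible_length n x y P i c \<le> 1/2 - (d + 1/2)"
    using False assms(1) by (intro side_visible_length_le assms(2)) arith+
  with False show ?thesis by simp
qed

lemma left_side_visible_le:
  assumes "in_front n P s u" "x s - 1 \<le> x u" "x u \<le> x s" "\<bar>y u - y s\<bar> \<le> 1"
  shows "side_visible_length n x y P s (left_side x y s) \<le> \<bar>y u - y s\<bar>"
  unfolding left_side_def using assms(2-)
  by (intro side_visible_length_le_offset coveredI[OF assms(1)]) arith+

lemma right_side_visible_le:
  assumes "in_front n P s u" "x s \<le> x u" "x u \<le> x s + 1" "\<bar>y u - y s\<bar> \<le> 1"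
  shows "side_visible_length n x y P s (right_side x y s) \<le> \<bar>y u - y s\<bar>"
  unfolding right_side_def using assms(2-)
  by (intro side_visible_length_le_offset coveredI[OF assms(1)]) arith+

lemma top_side_visible_le:
  assumes "in_front n P s u" "y s \<le> y u" "y u \<le> y s + 1" "\<bar>x u - x s\<bar> \<le> 1"
  shows "side_visible_length n x y P s (top_side x y s) \<le> \<bar>x u - x s\<bar>"
  unfolding top_side_def using assms(2-)
  by (intro side_visible_length_le_offset coveredI[OF assms(1)]) arith+

lemma bottom_side_visible_le:
  assumes "in_front n P s u" "y s - 1 \<le> y u" "y u \<le> y s" "\<bar>x u - x s\<bar> \<le> 1"
  shows "side_visible_length n x y P s (bottom_side x y s) \<le> \<bar>x u - x s\<bar>"
  unfolding bottom_side_def using assms(2-)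
  by (intro side_visible_length_le_offset coveredI[OF assms(1)]) arith+

lemma bad_cases:
  assumes "bad n x y P i"
  obtains (bottom_top) a b where
      "covered n x y P i (a, y i - 1/2)" "covered n x y P i (b, y i + 1/2)"
    | (bottom) "covered n x y P i (x i - 1/2, y i - 1/2)" "covered n x y P i (x i + 1/2, y i - 1/2)"
    | (top) "covered n x y P i (x i - 1/2, y i + 1/2)" "covered n x y P i (x i + 1/2, y i + 1/2)"
proof -
  let ?C = "{c \<in> corners x y i. covered n x y P i c}"
  have "finite ?C" by (simp add: corners_def)
  moreover have "\<not> card ?C \<le> Suc 0" using assms by (simp add: bad_def)
  ultimately obtain c\<^sub>1 c\<^sub>2 where "c\<^sub>1 \<in> ?C" "c\<^sub>2 \<in> ?C" "c\<^sub>1 \<noteq> c\<^sub>2"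
    by (auto simp: card_le_Suc0_iff_eq)
  then show thesis
    unfolding corners_def by (auto intro: that)
qed

lemma standard_bad_if_vertical_side_covered:
  assumes "(\<forall>t\<in>{-1/2..1/2}. covered n x y P i (left_side x y i t))
         \<or> (\<forall>t\<in>{-1/2..1/2}. covered n x y P i (right_side x y i t))"
  shows "standard_bad n x y P i"
proof -
  let ?C = "{c \<in> corners x y i. covered n x y P i c}"
  obtain c\<^sub>1 c\<^sub>2 where "c\<^sub>1 \<in> ?C" "c\<^sub>2 \<in> ?C" "c\<^sub>1 \<noteq> c\<^sub>2"
  proof (cases "\<forall>t\<in>{-1/2..1/2}. covered n x y P i (left_side x y i t)")
    case True
    then have "covered n x y P i (left_side x y i (-1/2))" "covered n x y P i (left_side x y i (1/2))"
      by auto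
    then show thesis
      by (intro that[of "left_side x y i (-1/2)" "left_side x y i (1/2)"])
        (auto simp: corners_def left_side_def)
  next
    case False
    with assms have "covered n x y P i (right_side x y i (-1/2))"
      "covered n x y P i (right_side x y i (1/2))"
      by auto
    then show thesis
      by (intro that[of "right_side x y i (-1/2)" "right_side x y i (1/2)"])
        (auto simp: corners_def right_side_def)
  qed
  moreover have "finite ?C" by (simp add: corners_def)
  ultimately have "card {c\<^sub>1, c\<^sub>2} \<le> card ?C" by (intro card_mono) auto
  with \<open>c\<^sub>1 \<noteq> c\<^sub>2\<close> have "bad n x y P i" by (simp add: bad_def)
  with assms show ?thesis by (simp add: standard_bad_def)
qed

lemma vertical_segment_covered:
  assumes "in_front n P s u" "in_front n P s v" "y v \<le> y s" "y s \<le> y u" "y u \<le> y v + 1"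
    and "\<bar>\<xi> - x u\<bar> \<le> 1/2" "\<bar>\<xi> - x v\<bar> \<le> 1/2" "\<bar>t\<bar> \<le> 1/2"
  shows "covered n x y P s (\<xi>, y s + t)"
  using unit_intervals_cover[of "y v" "y s" "y u" "y s + t"] assms coveredI by auto

lemma standard_bad_if_straddled:
  assumes u: "in_front n P s u" and v: "in_front n P s v"
    and y: "y v \<le> y s" "y s \<le> y u" "y u \<le> y v + 1"
    and x: "\<bar>x u - x s\<bar> \<le> 1" "\<bar>x v - x s\<bar> \<le> 1" "\<bar>x u - x v\<bar> \<le> 1"
    and perimeter: "2 < visible_perimeter n x y P s"
  shows "standard_bad n x y P s"
proof -
  have u_close: "\<bar>y u - y s\<bar> \<le> 1" and v_close: "\<bar>y v - y s\<bar> \<le> 1" using y by auto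
  consider (left) "x u \<le> x s" "x v \<le> x s" | (right) "x s \<le> x u" "x s \<le> x v"
    | (u_left_v_right) "x u \<le> x s" "x s \<le> x v" | (u_right_v_left) "x s \<le> x u" "x v \<le> x s"
    by linarith
  then show ?thesis
  proof cases
    case left
    have "\<bar>x s - 1/2 - x u\<bar> \<le> 1/2" "\<bar>x s - 1/2 - x v\<bar> \<le> 1/2" using left x by arith+
    then have "covered n x y P s (left_side x y s t)" if "t \<in> {-1/2..1/2}" for t
      unfolding left_side_def using that by (intro vertical_segment_covered[OF u v y]) auto
    then show ?thesis by (intro standard_bad_if_vertical_side_covered) blast
  next
    case right
    have "\<bar>x s + 1/2 - x u\<bar> \<le> 1/2" "\<bar>x s + 1/2 - x v\<bar> \<le> 1/2" using right x by arith+
    then have "covered n x y P s (right_side x y s t)" if "t \<in> {-1/2..1/2}" for t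
      unfolding right_side_def using that by (intro vertical_segment_covered[OF u v y]) auto
    then show ?thesis by (intro standard_bad_if_vertical_side_covered) blast
  next
    case u_left_v_right
    have "visible_perimeter n x y P s \<le> \<bar>x v - x s\<bar> + \<bar>x u - x s\<bar> + \<bar>y u - y s\<bar> + \<bar>y v - y s\<bar>"
      unfolding visible_perimeter_def using u_left_v_right x y u_close v_close
      by (intro add_mono left_side_visible_le[OF u] right_side_visible_le[OF v]
          top_side_visible_le[OF u] bottom_side_visible_le[OF v]) auto
    with u_left_v_right x y perimeter show ?thesis by linarith
  next
    case u_right_v_left
    have "visible_perimeter n x y P s \<le> \<bar>x v - x s\<bar> + \<bar>x u - x s\<bar> + \<bar>y v - y s\<bar> + \<bar>y u - y s\<bar>"
      unfolding visible_perimeter_def using u_right_v_left x y u_close v_close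
      by (intro add_mono left_side_visible_le[OF v] right_side_visible_le[OF u]
          top_side_visible_le[OF u] bottom_side_visible_le[OF v]) auto
    with u_right_v_left x y perimeter show ?thesis by linarith
  qed
qed

lemma horizontal_segment_covered:
  assumes "covered n x y P s (x s - 1/2, \<eta>)" "covered n x y P s (x s + 1/2, \<eta>)"
    and narrow: "\<And>i j. i < n \<Longrightarrow> j < n \<Longrightarrow> \<bar>x i - x j\<bar> \<le> 1"
    and "\<bar>t\<bar> \<le> 1/2"
  shows "covered n x y P s (x s + t, \<eta>)"
proof -
  obtain j\<^sub>1 where j\<^sub>1: "in_front n P s j\<^sub>1" "\<bar>x s - 1/2 - x j\<^sub>1\<bar> \<le> 1/2" "\<bar>\<eta> - y j\<^sub>1\<bar> \<le> 1/2"
    using assms(1) by (rule coveredE)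
  obtain j\<^sub>2 where j\<^sub>2: "in_front n P s j\<^sub>2" "\<bar>x s + 1/2 - x j\<^sub>2\<bar> \<le> 1/2" "\<bar>\<eta> - y j\<^sub>2\<bar> \<le> 1/2"
    using assms(2) by (rule coveredE)
  have "\<bar>x j\<^sub>2 - x j\<^sub>1\<bar> \<le> 1" using narrow j\<^sub>1(1) j\<^sub>2(1) by (simp add: in_front_def)
  moreover have "x j\<^sub>1 \<le> x s" "x s \<le> x j\<^sub>2" "\<bar>x s + t - x s\<bar> \<le> 1/2"
    using j\<^sub>1(2) j\<^sub>2(2) assms(4) by arith+
  ultimately have "\<bar>x s + t - x j\<^sub>1\<bar> \<le> 1/2 \<or> \<bar>x s + t - x j\<^sub>2\<bar> \<le> 1/2"
    by (intro unit_intervals_cover[of "x j\<^sub>1" "x s" "x j\<^sub>2"]) arith+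
  then show ?thesis using coveredI j\<^sub>1 j\<^sub>2 by blast
qed

lemma card_le_three_times_if_near:
  fixes B S :: "nat set"
  assumes "finite S" and "\<And>i. i \<in> B \<Longrightarrow> \<exists>s\<in>S. s + 1 = i \<or> s = i \<or> s = i + 1"
  shows "card B \<le> 3 * card S"
proof -
  have "B \<subseteq> (\<Union>s\<in>S. {s - 1, s, s + 1})"
  proof
    fix i assume "i \<in> B"
    then obtain s where "s \<in> S" "s + 1 = i \<or> s = i \<or> s = i + 1" using assms(2) by blast
    then show "i \<in> (\<Union>s\<in>S. {s - 1, s, s + 1})" by (auto intro!: bexI[of _ s])
  qed
  then have "card B \<le> card (\<Union>s\<in>S. {s - 1, s, s + 1})"
    using assms(1) by (intro card_mono) auto
  also have "\<dots> \<le> (\<Sum>s\<in>S. card {s - 1, s, s + 1})" by (rule card_UN_le[OF assms(1)])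
  also have "\<dots> \<le> (\<Sum>s\<in>S. 3)" by (intro sum_mono) (auto simp: card_insert_if)
  finally show ?thesis by simp
qed

lemma is_layout_mono: "w \<le> w' \<Longrightarrow> is_layout w n x P \<Longrightarrow> is_layout w' n x P"
  by (force simp: is_layout_def)

locale uniform_layout =
  fixes n :: nat and x y :: "nat \<Rightarrow> real" and P :: "(nat \<times> nat) set" and dl :: real
  assumes layout: "is_layout 2 n x P"
    and spacing: "\<And>i. i + 1 < n \<Longrightarrow> y (i + 1) = y i + dl"
    and dl_pos: "0 < dl" and dl_le_half: "dl \<le> 1/2"
    and reasonable: "reasonable dl n x y P"
begin

lemma x_dist_le_one:
  assumes "i < n" "j < n"
  shows "\<bar>x i - x j\<bar> \<le> 1"
proof -
  have "1/2 \<le> x i" "x i \<le> 3/2" "1/2 \<le> x j" "x j \<le> 3/2"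
    using layout assms by (auto simp: is_layout_def)
  then show ?thesis by arith
qed

lemma visible_perimeter_gt: "i < n \<Longrightarrow> 2 + dl < visible_perimeter n x y P i"
  using reasonable by (force simp: reasonable_def sq_gap_def)

lemma in_front_trans: "in_front n P i j \<Longrightarrow> in_front n P j k \<Longrightarrow> in_front n P i k"
  using layout unfolding is_layout_def strict_linear_order_on_def in_front_def trans_def irrefl_def
  by blast

lemma order_asym: "(i, j) \<in> P \<Longrightarrow> (j, i) \<notin> P"
  using layout unfolding is_layout_def strict_linear_order_on_def trans_def irrefl_def by blast

lemma order_total: "i < n \<Longrightarrow> j < n \<Longrightarrow> i \<noteq> j \<Longrightarrow> (i, j) \<in> P \<or> (j, i) \<in> P"
  using layout unfolding is_layout_def strict_linear_order_on_def total_on_def by blast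

lemma y_eq: "i < n \<Longrightarrow> y i = y 0 + real i * dl"
proof (induction i)
  case (Suc i)
  then show ?case using spacing[of i] by (simp add: algebra_simps)
qed simp

lemma y_less_iff: "i < n \<Longrightarrow> j < n \<Longrightarrow> y i < y j \<longleftrightarrow> i < j"
  using y_eq[of i] y_eq[of j] dl_pos by simp

lemma lower_witness:
  assumes "s < n" "covered n x y P s (a, y s - 1/2)"
  obtains j where "in_front n P s j" "j < s" "y s - 1 \<le> y j"
proof -
  obtain j where j: "in_front n P s j" "\<bar>y s - 1/2 - y j\<bar> \<le> 1/2"
    using assms(2) by (rule coveredE)
  have "j < n" "j \<noteq> s" using j(1) by (auto simp: in_front_def)
  moreover have "y j \<le> y s" "y s - 1 \<le> y j" using j(2) by arith+
  ultimately have "j < s" using y_less_iff[OF assms(1)] by (meson linorder_neqE_nat not_le)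
  with j(1) \<open>y s - 1 \<le> y j\<close> show thesis using that by blast
qed

lemma upper_witness:
  assumes "s < n" "covered n x y P s (a, y s + 1/2)"
  obtains j where "in_front n P s j" "s < j" "y j \<le> y s + 1"
proof -
  obtain j where j: "in_front n P s j" "\<bar>y s + 1/2 - y j\<bar> \<le> 1/2"
    using assms(2) by (rule coveredE)
  have "j < n" "j \<noteq> s" using j(1) by (auto simp: in_front_def)
  moreover have "y s \<le> y j" "y j \<le> y s + 1" using j(2) by arith+
  ultimately have "s < j" using y_less_iff[OF _ assms(1)] by (meson linorder_neqE_nat not_le)
  with j(1) \<open>y j \<le> y s + 1\<close> show thesis using that by blast
qed

lemma lower_neighbour_standard_bad:
  assumes "p + 1 < n" "(p, p + 1) \<in> P" and j: "in_front n P (p + 1) j" "j < p + 1" "y (p + 1) - 1 \<le> y j"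
  shows "standard_bad n x y P p"
proof -
  have front: "in_front n P p (p + 1)" using assms(1,2) by (simp add: in_front_def)
  have "j \<noteq> p" using assms(2) j(1) order_asym by (auto simp: in_front_def)
  with j(2) have "y j < y p" using assms(1) y_less_iff by simp
  moreover have "y (p + 1) = y p + dl" using assms(1) spacing by simp
  moreover have "j < n" using j(1) by (simp add: in_front_def)
  ultimately show ?thesis
    using front in_front_trans[OF front j(1)] j(3) x_dist_le_one assms(1) dl_pos visible_perimeter_gt[of p]
    by (intro standard_bad_if_straddled[of n P p "p + 1" j]) auto
qed

lemma upper_neighbour_standard_bad:
  assumes "s + 1 < n" "(s + 1, s) \<in> P" and j: "in_front n P s j" "s < j" "y j \<le> y s + 1"
  shows "standard_bad n x y P (s + 1)"
proof -
  have front: "in_front n P (s + 1) s" using assms(1,2) by (simp add: in_front_def)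
  have "j \<noteq> s + 1" using assms(2) j(1) order_asym by (auto simp: in_front_def)
  moreover have "j < n" using j(1) by (simp add: in_front_def)
  ultimately have "y (s + 1) < y j" using j(2) assms(1) y_less_iff by simp
  moreover have "y (s + 1) = y s + dl" using assms(1) spacing by simp
  ultimately show ?thesis
    using front in_front_trans[OF front j(1)] j(3) x_dist_le_one assms(1) \<open>j < n\<close> dl_pos
      visible_perimeter_gt[of "s + 1"]
    by (intro standard_bad_if_straddled[of n P "s + 1" j s]) auto
qed

lemma middle_standard_bad:
  assumes "p + 2 < n" "(p + 1, p) \<in> P" "(p + 1, p + 2) \<in> P"
  shows "standard_bad n x y P (p + 1)"
proof -
  have "in_front n P (p + 1) p" "in_front n P (p + 1) (p + 2)"
    using assms by (auto simp: in_front_def)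
  moreover have "y (p + 1) = y p + dl" "y (p + 2) = y p + 2 * dl"
    using assms(1) spacing[of p] spacing[of "p + 1"] by simp_all
  ultimately show ?thesis
    using x_dist_le_one assms(1) dl_pos dl_le_half visible_perimeter_gt[of "p + 1"]
    by (intro standard_bad_if_straddled[of n P "p + 1" "p + 2" p]) auto
qed

lemma horizontal_side_hidden:
  assumes "covered n x y P s (x s - 1/2, \<eta>)" "covered n x y P s (x s + 1/2, \<eta>)"
  shows "side_visible_length n x y P s (\<lambda>t. (x s + t, \<eta>)) \<le> 0"
  using side_visible_length_le[of 0 0] horizontal_segment_covered[OF assms x_dist_le_one] by force

lemma horizontal_sides_visible:
  assumes "s < n" "in_front n P s u" "\<bar>y u - y s\<bar> \<le> dl"
  shows "0 < side_visible_length n x y P s (bottom_side x y s)"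
    and "0 < side_visible_length n x y P s (top_side x y s)"
proof -
  have "\<bar>x u - x s\<bar> \<le> 1" "\<bar>y u - y s\<bar> \<le> 1"
    using x_dist_le_one assms dl_le_half by (auto simp: in_front_def)
  then have "side_visible_length n x y P s (left_side x y s) \<le> dl
           \<or> side_visible_length n x y P s (right_side x y s) \<le> dl"
    using left_side_visible_le[OF assms(2)] right_side_visible_le[OF assms(2)] assms(3)
    by (smt (verit))
  then show "0 < side_visible_length n x y P s (bottom_side x y s)"
    and "0 < side_visible_length n x y P s (top_side x y s)"
    using visible_perimeter_gt[OF assms(1)] side_visible_length_le_one
    unfolding visible_perimeter_def by (smt (verit))+
qed

lemma standard_bad_near_if_covered_below_and_above:
  assumes "s < n" "covered n x y P s (a, y s - 1/2)" "covered n x y P s (b, y s + 1/2)"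
  shows "\<exists>q<n. standard_bad n x y P q \<and> (q + 1 = s \<or> q = s \<or> q = s + 1)"
proof -
  obtain j\<^sub>1 where j\<^sub>1: "in_front n P s j\<^sub>1" "j\<^sub>1 < s" "y s - 1 \<le> y j\<^sub>1"
    using assms(1,2) by (rule lower_witness)
  obtain j\<^sub>2 where j\<^sub>2: "in_front n P s j\<^sub>2" "s < j\<^sub>2" "y j\<^sub>2 \<le> y s + 1"
    using assms(1,3) by (rule upper_witness)
  obtain p where p: "s = p + 1" using j\<^sub>1(2) by (cases s) auto
  have "s + 1 < n" using j\<^sub>2(1,2) by (simp add: in_front_def)
  have "(p, s) \<in> P \<or> (s, p) \<in> P" "(s + 1, s) \<in> P \<or> (s, s + 1) \<in> P"
    using order_total[of p s] order_total[of s "s + 1"] assms(1) p \<open>s + 1 < n\<close> by auto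
  then consider "(p, s) \<in> P" | "(s + 1, s) \<in> P" | "(s, p) \<in> P" "(s, s + 1) \<in> P"
    by blast
  then show ?thesis
  proof cases
    case 1
    then have "standard_bad n x y P p" using lower_neighbour_standard_bad j\<^sub>1 assms(1) p by blast
    then show ?thesis using assms(1) p by (intro exI[of _ p]) simp
  next
    case 2
    then have "standard_bad n x y P (s + 1)"
      using upper_neighbour_standard_bad j\<^sub>2 \<open>s + 1 < n\<close> by blast
    then show ?thesis using \<open>s + 1 < n\<close> by blast
  next
    case 3
    then have "standard_bad n x y P s"
      using middle_standard_bad[of p] p \<open>s + 1 < n\<close> by (simp add: numeral_2_eq_2)
    then show ?thesis using assms(1) by blast
  qed
qed

lemma standard_bad_below_if_bottom_corners_covered:
  assumes "s < n" "covered n x y P s (x s - 1/2, y s - 1/2)" "covered n x y P s (x s + 1/2, y s - 1/2)"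
  obtains p where "s = p + 1" "standard_bad n x y P p"
proof -
  obtain j where j: "in_front n P s j" "j < s" "y s - 1 \<le> y j"
    using assms(1,2) by (rule lower_witness)
  obtain p where p: "s = p + 1" using j(2) by (cases s) auto
  have "(p, s) \<in> P"
  proof (rule ccontr)
    assume "(p, s) \<notin> P"
    then have "in_front n P s p" using order_total[of p s] assms(1) p by (auto simp: in_front_def)
    moreover have "y s = y p + dl" using assms(1) p spacing by simp
    ultimately have "0 < side_visible_length n x y P s (bottom_side x y s)"
      using horizontal_sides_visible(1)[OF assms(1)] dl_pos by auto
    moreover have "side_visible_length n x y P s (bottom_side x y s) \<le> 0"
      using horizontal_side_hidden[OF assms(2,3)] by (simp add: bottom_side_def[abs_def])
    ultimately show False by simp
  qed
  then show thesis using lower_neighbour_standard_bad j assms(1) p that by blast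
qed

lemma standard_bad_above_if_top_corners_covered:
  assumes "s < n" "covered n x y P s (x s - 1/2, y s + 1/2)" "covered n x y P s (x s + 1/2, y s + 1/2)"
  shows "s + 1 < n" "standard_bad n x y P (s + 1)"
proof -
  obtain j where j: "in_front n P s j" "s < j" "y j \<le> y s + 1"
    using assms(1,2) by (rule upper_witness)
  show "s + 1 < n" using j(1,2) by (simp add: in_front_def)
  have "(s + 1, s) \<in> P"
  proof (rule ccontr)
    assume "(s + 1, s) \<notin> P"
    then have "in_front n P s (s + 1)"
      using order_total[of s "s + 1"] \<open>s + 1 < n\<close> by (auto simp: in_front_def)
    moreover have "y (s + 1) = y s + dl" using \<open>s + 1 < n\<close> spacing by simp
    ultimately have "0 < side_visible_length n x y P s (top_side x y s)"
      using horizontal_sides_visible(2)[OF assms(1)] dl_pos by auto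
    moreover have "side_visible_length n x y P s (top_side x y s) \<le> 0"
      using horizontal_side_hidden[OF assms(2,3)] by (simp add: top_side_def[abs_def])
    ultimately show False by simp
  qed
  then show "standard_bad n x y P (s + 1)"
    using upper_neighbour_standard_bad j \<open>s + 1 < n\<close> by blast
qed

lemma bad_near_standard_bad:
  assumes "s < n" "bad n x y P s"
  shows "\<exists>q<n. standard_bad n x y P q \<and> (q + 1 = s \<or> q = s \<or> q = s + 1)"
  using assms(2)
proof (cases rule: bad_cases)
  case (bottom_top a b)
  with assms(1) show ?thesis by (rule standard_bad_near_if_covered_below_and_above)
next
  case bottom
  then obtain p where "s = p + 1" "standard_bad n x y P p"
    using assms(1) standard_bad_below_if_bottom_corners_covered by blast
  then show ?thesis using assms(1) by (intro exI[of _ p]) simp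
next
  case top
  then show ?thesis using assms(1) standard_bad_above_if_top_corners_covered by blast
qed

lemma card_bad_le_three_card_standard_bad:
  "card {i. i < n \<and> bad n x y P i \<and> y i \<in> {a..b}}
     \<le> 3 * card {i. i < n \<and> standard_bad n x y P i \<and> y i \<in> {a - dl..b + dl}}"
proof (rule card_le_three_times_if_near)
  fix i assume "i \<in> {i. i < n \<and> bad n x y P i \<and> y i \<in> {a..b}}"
  then have i: "i < n" "bad n x y P i" "y i \<in> {a..b}" by auto
  then obtain q where q: "q < n" "standard_bad n x y P q" "q + 1 = i \<or> q = i \<or> q = i + 1"
    using bad_near_standard_bad by blast
  have "\<bar>y q - y i\<bar> \<le> dl"
    using q(3) spacing[of q] spacing[of i] q(1) i(1) dl_pos by auto
  with q i(3) show "\<exists>q\<in>{i. i < n \<and> standard_bad n x y P i \<and> y i \<in> {a - dl..b + dl}}.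
      q + 1 = i \<or> q = i \<or> q = i + 1"
    by auto
qed auto

end

theorem corollary13:
  fixes w h a b :: real and k n :: nat and x y :: "nat \<Rightarrow> real" and P :: "(nat \<times> nat) set"
  assumes "1 < w" "w \<le> 2" "1 < h" "2 \<le> k"
    and "\<forall>i<n. 1/2 \<le> y i \<and> y i \<le> h - 1/2"
    and "\<forall>i. i + 1 < n \<longrightarrow> y (i + 1) - y i = 1 / real k"
    and "is_layout w n x P"
    and "reasonable (1 / real k) n x y P"
    and "{a..b} \<subseteq> {1/2..h - 1/2}"
  shows "card {i. i < n \<and> bad n x y P i \<and> y i \<in> {a..b}}
         \<le> 3 * card {i. i < n \<and> standard_bad n x y P i \<and> y i \<in> {a - 1/real k..b + 1/real k}}"
proof -
  \<comment> \<open>of the bounds on \<open>w\<close>, \<open>h\<close>, \<open>k\<close>, the \<open>y i\<close> and the window only \<open>w \<le> 2\<close> and \<open>2 \<le> k\<close> are used\<close>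
  interpret uniform_layout n x y P "1 / real k"
  proof
    show "is_layout 2 n x P" using assms(2,7) by (rule is_layout_mono)
    show "y (i + 1) = y i + 1 / real k" if "i + 1 < n" for i using assms(6) that by force
    show "0 < 1 / real k" "1 / real k \<le> 1/2" using assms(4) by (simp_all add: field_simps)
  qed (fact assms(8))
  show ?thesis by (rule card_bad_le_three_card_standard_bad)
qed

end
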